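(* Let $\mathcal F$ be a proper filter on $\omega$. The game $\mathfrak G(\mathcal F^+,[\omega]^{<\omega},\mathcal F^c)$ is dual to the game $\mathfrak G(\mathcal F,\omega,\mathcal F)$ (a player has a winning strategy in one iff the other player has one in the other). Consequently, in $\mathfrak G(\mathcal F^+,[\omega]^{<\omega},\mathcal F^c)$, player I never has a winning strategy, and player II has a winning strategy if and only if $\mathcal F$ is not Ramsey.
   Context: A filter on $\omega$ is a family $\mathcal F\subseteq\mathcal P(\omega)$ closed under finite intersections and supersets and containing all cofinite sets; it is proper if all its members are infinite. $\mathcal F^+=\{X:\omega\setminus X\notin\mathcal F\}$, $\mathcal F^c=\mathcal P(\omega)\setminus\mathcal F$. Game $\mathfrak G(\mathcal X,\omega,\mathcal Z)$: at each stage $k$, I chooses $X_k\in\mathcal X$ and II responds with $n_k\in X_k$; II wins if $\{n_k:k\in\omega\}\in\mathcal Z$. Game $\mathfrak G(\mathcal X,[\omega]^{<\omega},\mathcal Z)$: at each stage $k$, I chooses $X_k\in\mathcal X$ and II responds with a nonempty finite $s_k\subseteq X_k$; II wins if $\bigcup_k s_k\in\mathcal Z$. In each game I wins when II does not. A tree is a set $T$ of finite sequences of natural numbers containing the empty sequence and closed under initial segments; it is an $\mathcal F$-tree if for each $\bar s\in T$ there is $X_{\bar s}\in\mathcal F$ with $\bar s^\frown n\in T$ for all $n\in X_{\bar s}$; a branch (infinite sequence with all initial segments in $T$) is in $\mathcal F$ if its set of values is in $\mathcal F$. $\mathcal F$ is Ramsey if every $\mathcal F$-tree has a branch in $\mathcal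 F$. *)

theory Defs
  imports Main
begin

definition is_filter :: "nat set set \<Rightarrow> bool" where
  "is_filter F \<longleftrightarrow>
     (\<forall>A\<in>F. \<forall>B\<in>F. A \<inter> B \<in> F) \<and>
     (\<forall>A\<in>F. \<forall>B. A \<subseteq> B \<longrightarrow> B \<in> F) \<and>
     (\<forall>A. finite (- A) \<longrightarrow> A \<in> F)"

definition proper_filter :: "nat set set \<Rightarrow> bool" where
  "proper_filter F \<longleftrightarrow> is_filter F \<and> (\<forall>A\<in>F. infinite A)"

definition positive_sets :: "nat set set \<Rightarrow> nat set set" where
  "positive_sets F = {X. - X \<notin> F}"

definition co_family :: "nat set set \<Rightarrow> nat set set" where
  "co_family F = - F"

text \<open>A generic game: at stage k player I plays a set in XX, player II answers with a
  move m of type 'm which must be legal for that set; II wins iff res (of the whole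
  sequence of II's moves) belongs to Z.  A strategy for I maps the finite history of II's
  moves to I's next move; a strategy for II maps the finite history of I's moves (ending with
  the current move) to II's answer.\<close>

definition I_has_ws ::
  "nat set set \<Rightarrow> (nat set \<Rightarrow> 'm \<Rightarrow> bool) \<Rightarrow> ((nat \<Rightarrow> 'm) \<Rightarrow> nat set) \<Rightarrow> nat set set \<Rightarrow> bool" where
  "I_has_ws XX legal res Z \<longleftrightarrow>
     (\<exists>\<sigma> :: 'm list \<Rightarrow> nat set.
        (\<forall>h. \<sigma> h \<in> XX) \<and>
        (\<forall>m. (\<forall>k. legal (\<sigma> (map m [0..<k])) (m k)) \<longrightarrow> res m \<notin> Z))"

definition II_has_ws ::
  "nat set set \<Rightarrow> (nat set \<Rightarrow> 'm \<Rightarrow> bool) \<Rightarrow> ((nat \<Rightarrow> 'm) \<Rightarrow> nat set) \<Rightarrow> nat set set \<Rightarrow> bool" where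
  "II_has_ws XX legal res Z \<longleftrightarrow>
     (\<exists>\<tau> :: nat set list \<Rightarrow> 'm.
        (\<forall>Xs X. set Xs \<subseteq> XX \<longrightarrow> X \<in> XX \<longrightarrow> legal X (\<tau> (Xs @ [X]))) \<and>
        (\<forall>Xs. (\<forall>k. Xs k \<in> XX) \<longrightarrow> res (\<lambda>k. \<tau> (map Xs [0..<Suc k])) \<in> Z))"

text \<open>The game G(XX, omega, Z): II answers with a natural number in I's set.\<close>

definition legal_pt :: "nat set \<Rightarrow> nat \<Rightarrow> bool" where
  "legal_pt X n \<longleftrightarrow> n \<in> X"

definition res_pt :: "(nat \<Rightarrow> nat) \<Rightarrow> nat set" where
  "res_pt m = range m"

text \<open>The game G(XX, [omega]^<omega, Z): II answers with a nonempty finite subset.\<close>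

definition legal_fin :: "nat set \<Rightarrow> nat set \<Rightarrow> bool" where
  "legal_fin X s \<longleftrightarrow> s \<noteq> {} \<and> finite s \<and> s \<subseteq> X"

definition res_fin :: "(nat \<Rightarrow> nat set) \<Rightarrow> nat set" where
  "res_fin m = (\<Union>k. m k)"

definition is_tree :: "nat list set \<Rightarrow> bool" where
  "is_tree T \<longleftrightarrow> [] \<in> T \<and> (\<forall>s\<in>T. \<forall>k. take k s \<in> T)"

definition F_tree :: "nat set set \<Rightarrow> nat list set \<Rightarrow> bool" where
  "F_tree F T \<longleftrightarrow> is_tree T \<and> (\<forall>s\<in>T. \<exists>X\<in>F. \<forall>n\<in>X. s @ [n] \<in> T)"

definition is_branch :: "nat list set \<Rightarrow> (nat \<Rightarrow> nat) \<Rightarrow> bool" where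
  "is_branch T b \<longleftrightarrow> (\<forall>k. map b [0..<k] \<in> T)"

definition Ramsey :: "nat set set \<Rightarrow> bool" where
  "Ramsey F \<longleftrightarrow> (\<forall>T. F_tree F T \<longrightarrow> (\<exists>b. is_branch T b \<and> range b \<in> F))"

end

theory Submission
  imports Defs
begin

text \<open>
  Both dualities come from copying strategies, using that a positive set meets every member
  of the filter. A winning strategy of I in the point game \<open>\<sigma>\<close> is beaten in the set game by
  answering each positive move \<open>X\<close> with a singleton from \<open>X \<inter> \<sigma>(history)\<close>; fed with
  singletons, a winning strategy of I in the set game likewise gives II a winning strategy in the
  point game. Conversely, against a winning strategy \<open>\<tau>\<close> of II in the set game, I plays in the
  point game the set of all points that \<open>\<tau>\<close> could use in its next answer to some positive
  move. This set lies in the filter, because otherwise its complement would be a positive move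
  that \<open>\<tau>\<close> must answer inside it. Tracing each answer of II back to such a positive move yields
  a play against \<open>\<tau>\<close> whose union contains all the answers and is not in the filter.

  II never wins the point game: I runs two plays against one strategy, each move avoiding the
  finitely many points answered so far in both plays, so the two outcomes are disjoint members of
  the filter. Finally, strategies of I in the point game are the same thing as filter-trees
  without branches in the filter, which is exactly the failure of the Ramsey property.
\<close>

definition replies :: "('b list \<Rightarrow> 'a \<Rightarrow> 'b) \<Rightarrow> 'a list \<Rightarrow> 'b list" where
  "replies r xs = foldl (\<lambda>ys x. ys @ [r ys x]) [] xs"

lemma replies_Nil [simp]: "replies r [] = []"
  by (simp add: replies_def)

lemma replies_snoc [simp]: "replies r (xs @ [x]) = replies r xs @ [r (replies r xs) x]"
  by (simp add: replies_def)

lemma replies_map_upt: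
  "replies r (map X [0..<k]) = map (\<lambda>i. r (replies r (map X [0..<i])) (X i)) [0..<k]"
  by (induction k) auto

lemma II_has_wsI_own_moves:
  fixes r :: "'m list \<Rightarrow> nat set \<Rightarrow> 'm"
  assumes legal: "\<And>h X. X \<in> XX \<Longrightarrow> legal X (r h X)"
    and win: "\<And>m Xs. \<forall>k. Xs k \<in> XX \<Longrightarrow> \<forall>k. m k = r (map m [0..<k]) (Xs k) \<Longrightarrow> res m \<in> Z"
  shows "II_has_ws XX legal res Z"
  unfolding II_has_ws_def
proof (intro exI[of _ "\<lambda>Xs. last (replies r Xs)"] conjI allI impI)
  fix Xs X assume "X \<in> XX"
  then show "legal X (last (replies r (Xs @ [X])))"
    using legal by simp
next
  fix Xs :: "nat \<Rightarrow> nat set" assume Xs: "\<forall>k. Xs k \<in> XX"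
  define m where "m k = r (replies r (map Xs [0..<k])) (Xs k)" for k
  have history: "replies r (map Xs [0..<k]) = map m [0..<k]" for k
    unfolding m_def by (rule replies_map_upt)
  have "res m \<in> Z"
    using win[OF Xs] by (simp add: m_def history)
  moreover have "(\<lambda>k. last (replies r (map Xs [0..<Suc k]))) = m"
    by (simp only: history) simp
  ultimately show "res (\<lambda>k. last (replies r (map Xs [0..<Suc k]))) \<in> Z"
    by simp
qed

lemma I_has_wsI_simulation:
  fixes \<sigma> :: "'s list \<Rightarrow> nat set" and upd :: "'s list \<Rightarrow> 'm \<Rightarrow> 's"
  assumes upd: "\<And>p x. upd p x \<in> S"
    and moves: "\<And>p. set p \<subseteq> S \<Longrightarrow> \<sigma> p \<in> XX"
    and win: "\<And>m ps. \<forall>k. ps k = upd (map ps [0..<k]) (m k) \<Longrightarrow>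
                \<forall>k. legal (\<sigma> (map ps [0..<k])) (m k) \<Longrightarrow> res m \<notin> Z"
  shows "I_has_ws XX legal res Z"
  unfolding I_has_ws_def
proof (intro exI[of _ "\<lambda>h. \<sigma> (replies upd h)"] conjI allI impI)
  fix h :: "'m list"
  have "set (replies upd h) \<subseteq> S"
    by (induction h rule: rev_induct) (auto simp: upd)
  then show "\<sigma> (replies upd h) \<in> XX"
    by (rule moves)
next
  fix m assume legal: "\<forall>k. legal (\<sigma> (replies upd (map m [0..<k]))) (m k)"
  define ps where "ps k = upd (replies upd (map m [0..<k])) (m k)" for k
  have history: "replies upd (map m [0..<k]) = map ps [0..<k]" for k
    unfolding ps_def by (rule replies_map_upt)
  show "res m \<notin> Z"
    using win[of ps m] legal by (simp add: ps_def history)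
qed

section \<open>Strategies of I in the point game as trees\<close>

lemma tree_if_I_has_ws_point_game:
  assumes "I_has_ws XX legal_pt res_pt Z"
  shows "\<exists>T. F_tree XX T \<and> (\<forall>b. is_branch T b \<longrightarrow> range b \<notin> Z)"
proof -
  obtain \<sigma> where \<sigma>: "\<And>h. \<sigma> h \<in> XX"
    and \<sigma>_wins: "\<And>m. \<forall>k. m k \<in> \<sigma> (map m [0..<k]) \<Longrightarrow> range m \<notin> Z"
    using assms unfolding I_has_ws_def legal_pt_def res_pt_def by blast
  define T where "T = {s. \<forall>k<length s. s ! k \<in> \<sigma> (take k s)}"
  have "F_tree XX T"
    unfolding F_tree_def is_tree_def
  proof (intro conjI ballI allI)
    show "[] \<in> T" by (simp add: T_def)
  next
    fix s k assume "s \<in> T"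
    then show "take k s \<in> T" by (auto simp: T_def)
  next
    fix s assume "s \<in> T"
    then show "\<exists>X\<in>XX. \<forall>n\<in>X. s @ [n] \<in> T"
      by (intro bexI[OF _ \<sigma>]) (auto simp: T_def nth_append less_Suc_eq)
  qed
  moreover have "is_branch T b \<longleftrightarrow> (\<forall>k. b k \<in> \<sigma> (map b [0..<k]))" for b
    unfolding is_branch_def T_def by (auto simp: take_map)
  ultimately show ?thesis
    using \<sigma>_wins by blast
qed

lemma I_has_ws_point_game_if_tree:
  assumes T: "F_tree XX T" and no_branch: "\<And>b. is_branch T b \<Longrightarrow> range b \<notin> Z"
  shows "I_has_ws XX legal_pt res_pt Z"
proof -
  obtain succ where succ: "\<And>s. s \<in> T \<Longrightarrow> succ s \<in> XX \<and> (\<forall>n\<in>succ s. s @ [n] \<in> T)"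
    using T unfolding F_tree_def by metis
  have root: "[] \<in> T"
    using T by (simp add: F_tree_def is_tree_def)
  define \<sigma> where "\<sigma> s = succ (if s \<in> T then s else [])" for s
  show ?thesis
    unfolding I_has_ws_def legal_pt_def res_pt_def
  proof (intro exI[of _ \<sigma>] conjI allI impI)
    fix h show "\<sigma> h \<in> XX"
      using succ root by (simp add: \<sigma>_def)
  next
    fix m assume m: "\<forall>k. m k \<in> \<sigma> (map m [0..<k])"
    have "map m [0..<k] \<in> T" for k
    proof (induction k)
      case (Suc k)
      then have "m k \<in> succ (map m [0..<k])"
        using m[rule_format, of k] by (simp add: \<sigma>_def)
      with succ[OF Suc] show ?case by simp
    qed (use root in simp)
    then show "range m \<notin> Z"
      using no_branch unfolding is_branch_def by blast
  qed
qed

lemma I_has_ws_point_game_iff_tree: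
  "I_has_ws XX legal_pt res_pt Z \<longleftrightarrow> (\<exists>T. F_tree XX T \<and> (\<forall>b. is_branch T b \<longrightarrow> range b \<notin> Z))"
  using tree_if_I_has_ws_point_game I_has_ws_point_game_if_tree by blast

lemma proper_filter_cofinite: "proper_filter F \<Longrightarrow> finite (- A) \<Longrightarrow> A \<in> F"
  unfolding proper_filter_def is_filter_def by blast

lemma proper_filter_mono: "proper_filter F \<Longrightarrow> A \<in> F \<Longrightarrow> A \<subseteq> B \<Longrightarrow> B \<in> F"
  unfolding proper_filter_def is_filter_def by blast

lemma proper_filter_Int: "proper_filter F \<Longrightarrow> A \<in> F \<Longrightarrow> B \<in> F \<Longrightarrow> A \<inter> B \<in> F"
  unfolding proper_filter_def is_filter_def by blast

lemma proper_filter_empty: "proper_filter F \<Longrightarrow> {} \<notin> F"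
  unfolding proper_filter_def by blast

lemma UNIV_in_positive_sets: "proper_filter F \<Longrightarrow> UNIV \<in> positive_sets F"
  by (simp add: positive_sets_def proper_filter_empty)

lemma positive_set_meets_filter_set:
  assumes "proper_filter F" "X \<in> positive_sets F" "Y \<in> F"
  shows "X \<inter> Y \<noteq> {}"
proof
  assume "X \<inter> Y = {}"
  then have "Y \<subseteq> - X"
    by blast
  then have "- X \<in> F"
    by (rule proper_filter_mono[OF assms(1,3)])
  with assms(2) show False
    by (simp add: positive_sets_def)
qed

section \<open>The duality\<close>

lemma II_set_game_if_I_point_game:
  assumes F: "proper_filter F" and "I_has_ws F legal_pt res_pt F"
  shows "II_has_ws (positive_sets F) legal_fin res_fin (co_family F)"
proof -
  obtain \<sigma> where \<sigma>: "\<And>h. \<sigma> h \<in> F"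
    and \<sigma>_wins: "\<And>m. \<forall>k. m k \<in> \<sigma> (map m [0..<k]) \<Longrightarrow> range m \<notin> F"
    using assms(2) unfolding I_has_ws_def legal_pt_def res_pt_def by blast
  define pick where "pick h X = (SOME n. n \<in> X \<inter> \<sigma> h)" for h X
  have pick: "pick h X \<in> X \<inter> \<sigma> h" if "X \<in> positive_sets F" for h X
    unfolding pick_def using positive_set_meets_filter_set[OF F that \<sigma>]
    by (metis ex_in_conv someI_ex)
  show ?thesis
  proof (rule II_has_wsI_own_moves[where r = "\<lambda>h X. {pick (map the_elem h) X}"])
    fix h X assume "X \<in> positive_sets F"
    then show "legal_fin X {pick (map the_elem h) X}"
      using pick by (simp add: legal_fin_def)
  next
    fix m Xs
    assume Xs: "\<forall>k. Xs k \<in> positive_sets F"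
      and m: "\<forall>k. m k = {pick (map the_elem (map m [0..<k])) (Xs k)}"
    define n where "n k = pick (map the_elem (map m [0..<k])) (Xs k)" for k
    have m_n: "m k = {n k}" for k
      unfolding n_def using m by blast
    have history: "map the_elem (map m [0..<k]) = map n [0..<k]" for k
      by (simp add: m_n)
    have "n k = pick (map n [0..<k]) (Xs k)" for k
      by (simp only: n_def[of k] history)
    then have "n k \<in> \<sigma> (map n [0..<k])" for k
      using pick[OF Xs[rule_format, of k]] by simp
    then have "range n \<notin> F"
      by (rule \<sigma>_wins[rule_format])
    moreover have "res_fin m = range n"
      by (auto simp: res_fin_def m_n)
    ultimately show "res_fin m \<in> co_family F"
      by (simp add: co_family_def)
  qed
qed

lemma II_point_game_if_I_set_game:
  assumes F: "proper_filter F" and "I_has_ws (positive_sets F) legal_fin res_fin (co_family F)"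
  shows "II_has_ws F legal_pt res_pt F"
proof -
  obtain \<sigma> where \<sigma>: "\<And>h. \<sigma> h \<in> positive_sets F"
    and \<sigma>_wins: "\<And>s. \<forall>k. legal_fin (\<sigma> (map s [0..<k])) (s k) \<Longrightarrow> (\<Union>k. s k) \<in> F"
    using assms(2) unfolding I_has_ws_def res_fin_def co_family_def by blast
  define pick where "pick h X = (SOME n. n \<in> X \<inter> \<sigma> h)" for h X
  have pick: "pick h X \<in> X \<inter> \<sigma> h" if "X \<in> F" for h X
    unfolding pick_def using positive_set_meets_filter_set[OF F \<sigma> that]
    by (metis Int_commute ex_in_conv someI_ex)
  show ?thesis
  proof (rule II_has_wsI_own_moves[where r = "\<lambda>h X. pick (map (\<lambda>i. {i}) h) X"])
    fix h X assume "X \<in> F"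
    then show "legal_pt X (pick (map (\<lambda>i. {i}) h) X)"
      using pick by (simp add: legal_pt_def)
  next
    fix m Xs
    assume Xs: "\<forall>k. Xs k \<in> F"
      and m: "\<forall>k. m k = pick (map (\<lambda>i. {i}) (map m [0..<k])) (Xs k)"
    have "legal_fin (\<sigma> (map (\<lambda>i. {m i}) [0..<k])) {m k}" for k
      using pick[OF Xs[rule_format, of k]] m[rule_format, of k]
      by (simp add: legal_fin_def comp_def)
    then have "(\<Union>k. {m k}) \<in> F"
      by (rule \<sigma>_wins[rule_format])
    moreover have "(\<Union>k. {m k}) = range m"
      by blast
    ultimately show "res_pt m \<in> F"
      by (simp add: res_pt_def)
  qed
qed

lemma I_point_game_if_II_set_game:
  assumes F: "proper_filter F" and "II_has_ws (positive_sets F) legal_fin res_fin (co_family F)"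
  shows "I_has_ws F legal_pt res_pt F"
proof -
  let ?P = "positive_sets F"
  obtain \<tau> where \<tau>: "\<And>Xs X. set Xs \<subseteq> ?P \<Longrightarrow> X \<in> ?P \<Longrightarrow> legal_fin X (\<tau> (Xs @ [X]))"
    and \<tau>_wins: "\<And>Xs. \<forall>k. Xs k \<in> ?P \<Longrightarrow> (\<Union>k. \<tau> (map Xs [0..<Suc k])) \<notin> F"
    using assms(2) unfolding II_has_ws_def res_fin_def co_family_def by blast
  define reachable where "reachable p = {n. \<exists>Y\<in>?P. n \<in> \<tau> (p @ [Y])}" for p
  have reachable: "reachable p \<in> F" if p: "set p \<subseteq> ?P" for p
  proof (rule ccontr)
    assume "reachable p \<notin> F"
    then have "- reachable p \<in> ?P"
      by (simp add: positive_sets_def)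
    then have "legal_fin (- reachable p) (\<tau> (p @ [- reachable p]))"
      using \<tau> p by blast
    with \<open>- reachable p \<in> ?P\<close> show False
      unfolding legal_fin_def reachable_def by blast
  qed
  define upd where
    "upd p n = (SOME Y. Y \<in> ?P \<and> (n \<in> reachable p \<longrightarrow> n \<in> \<tau> (p @ [Y])))" for p n
  have upd: "upd p n \<in> ?P \<and> (n \<in> reachable p \<longrightarrow> n \<in> \<tau> (p @ [upd p n]))" for p n
    unfolding upd_def
  proof (rule someI_ex)
    show "\<exists>Y. Y \<in> ?P \<and> (n \<in> reachable p \<longrightarrow> n \<in> \<tau> (p @ [Y]))"
      using UNIV_in_positive_sets[OF F] unfolding reachable_def by blast
  qed
  show ?thesis
  proof (rule I_has_wsI_simulation[where upd = upd and S = ?P and \<sigma> = reachable])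
    fix m ps
    assume ps: "\<forall>k. ps k = upd (map ps [0..<k]) (m k)"
      and m: "\<forall>k. legal_pt (reachable (map ps [0..<k])) (m k)"
    have "m k \<in> \<tau> (map ps [0..<Suc k])" for k
      using upd[of "map ps [0..<k]" "m k"] ps[rule_format, of k] m[rule_format, of k]
      by (simp add: legal_pt_def)
    then have "range m \<subseteq> (\<Union>k. \<tau> (map ps [0..<Suc k]))"
      by blast
    moreover have "ps k \<in> ?P" for k
      using upd ps[rule_format, of k] by simp
    then have "(\<Union>k. \<tau> (map ps [0..<Suc k])) \<notin> F"
      by (intro \<tau>_wins allI)
    ultimately show "res_pt m \<notin> F"
      unfolding res_pt_def using proper_filter_mono[OF F] by blast
  qed (use upd reachable in auto)
qed

definition answers :: "('x list \<Rightarrow> 'm) \<Rightarrow> 'x list \<Rightarrow> 'm set" where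
  "answers \<tau> xs = (\<lambda>i. \<tau> (take (Suc i) xs)) ` {..<length xs}"

lemma answers_map_upt: "answers \<tau> (map X [0..<k]) = (\<lambda>i. \<tau> (map X [0..<Suc i])) ` {..<k}"
  unfolding answers_def by (intro image_cong) (auto simp: take_map simp del: upt_Suc)

primrec twin_plays :: "(nat set list \<Rightarrow> nat) \<Rightarrow> nat \<Rightarrow> nat set list \<times> nat set list" where
  "twin_plays \<tau> 0 = ([], [])"
| "twin_plays \<tau> (Suc k) =
     (let (A, B) = twin_plays \<tau> k; U = answers \<tau> A \<union> answers \<tau> B
      in (A @ [- U], B @ [- insert (\<tau> (A @ [- U])) U]))"

lemma fst_twin_plays_Suc:
  "fst (twin_plays \<tau> (Suc k)) = fst (twin_plays \<tau> k)
     @ [- (answers \<tau> (fst (twin_plays \<tau> k)) \<union> answers \<tau> (snd (twin_plays \<tau> k)))]"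
  by (simp add: case_prod_beta Let_def)

lemma snd_twin_plays_Suc:
  "snd (twin_plays \<tau> (Suc k)) = snd (twin_plays \<tau> k)
     @ [- insert (\<tau> (fst (twin_plays \<tau> (Suc k))))
          (answers \<tau> (fst (twin_plays \<tau> k)) \<union> answers \<tau> (snd (twin_plays \<tau> k)))]"
  by (simp add: case_prod_beta Let_def)

lemma snoc_chain_eq_map_upt:
  assumes "xs 0 = []" and "\<And>k. xs (Suc k) = xs k @ [x k]"
  shows "xs k = map x [0..<k]"
  by (induction k) (simp_all add: assms)

lemma disjoint_ranges_if_fresh:
  fixes a b :: "nat \<Rightarrow> 'a"
  assumes a: "\<And>k. a k \<notin> b ` {..<k}" and b: "\<And>k. b k \<notin> a ` {..k}"
  shows "range a \<inter> range b = {}"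
proof -
  have "a i \<noteq> b j" for i j
  proof (cases "i \<le> j")
    case True
    then have "a i \<in> a ` {..j}" by simp
    then show ?thesis using b[of j] by auto
  next
    case False
    then show ?thesis using a[of i] by auto
  qed
  then show ?thesis by blast
qed

lemma not_II_has_ws_point_game:
  assumes F: "proper_filter F"
  shows "\<not> II_has_ws F legal_pt res_pt F"
proof
  assume "II_has_ws F legal_pt res_pt F"
  then obtain \<tau> where \<tau>: "\<And>Xs X. set Xs \<subseteq> F \<Longrightarrow> X \<in> F \<Longrightarrow> \<tau> (Xs @ [X]) \<in> X"
    and \<tau>_wins: "\<And>Xs. \<forall>k. Xs k \<in> F \<Longrightarrow> range (\<lambda>k. \<tau> (map Xs [0..<Suc k])) \<in> F"
    unfolding II_has_ws_def legal_pt_def res_pt_def by blast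
  define XA where "XA k = last (fst (twin_plays \<tau> (Suc k)))" for k
  define XB where "XB k = last (snd (twin_plays \<tau> (Suc k)))" for k
  have play_A: "fst (twin_plays \<tau> k) = map XA [0..<k]" for k
    by (rule snoc_chain_eq_map_upt)
      (simp_all add: XA_def fst_twin_plays_Suc del: twin_plays.simps(2))
  have play_B: "snd (twin_plays \<tau> k) = map XB [0..<k]" for k
    by (rule snoc_chain_eq_map_upt)
      (simp_all add: XB_def snd_twin_plays_Suc del: twin_plays.simps(2))
  define a where "a k = \<tau> (map XA [0..<Suc k])" for k
  define b where "b k = \<tau> (map XB [0..<Suc k])" for k
  define U where "U k = a ` {..<k} \<union> b ` {..<k}" for k
  have answers_U: "answers \<tau> (map XA [0..<k]) \<union> answers \<tau> (map XB [0..<k]) = U k" for k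
    by (simp add: answers_map_upt U_def a_def b_def del: upt_Suc)
  have XA_eq: "XA k = - U k" for k
    unfolding XA_def fst_twin_plays_Suc play_A[of k] play_B[of k] answers_U by simp
  have XB_eq: "XB k = - insert (a k) (U k)" for k
    unfolding XB_def snd_twin_plays_Suc fst_twin_plays_Suc play_A[of k] play_B[of k] answers_U
    by (simp add: a_def XA_eq)
  have XA_in: "XA k \<in> F" and XB_in: "XB k \<in> F" for k
    unfolding XA_eq XB_eq using proper_filter_cofinite[OF F] by (simp_all add: U_def)
  have "a k \<in> XA k" and "b k \<in> XB k" for k
    unfolding a_def b_def by (auto intro!: \<tau> simp: XA_in XB_in)
  then have "range a \<inter> range b = {}"
    by (intro disjoint_ranges_if_fresh) (auto simp: XA_eq XB_eq U_def lessThan_Suc simp flip: lessThan_Suc_atMost)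
  moreover have "range a \<in> F" and "range b \<in> F"
    unfolding a_def b_def using \<tau>_wins XA_in XB_in by blast+
  ultimately show False
    using proper_filter_Int[OF F] proper_filter_empty[OF F] by metis
qed

theorem theorem2p21:
  fixes F :: "nat set set"
  assumes "proper_filter F"
  shows "(I_has_ws (positive_sets F) legal_fin res_fin (co_family F)
            \<longleftrightarrow> II_has_ws F legal_pt res_pt F)
       \<and> (II_has_ws (positive_sets F) legal_fin res_fin (co_family F)
            \<longleftrightarrow> I_has_ws F legal_pt res_pt F)
       \<and> \<not> I_has_ws (positive_sets F) legal_fin res_fin (co_family F)
       \<and> (II_has_ws (positive_sets F) legal_fin res_fin (co_family F) \<longleftrightarrow> \<not> Ramsey F)"
proof -
  have no_II_point: "\<not> II_has_ws F legal_pt res_pt F"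
    using not_II_has_ws_point_game[OF assms] .
  then have no_I_set: "\<not> I_has_ws (positive_sets F) legal_fin res_fin (co_family F)"
    using II_point_game_if_I_set_game[OF assms] by blast
  have II_set_iff_I_point: "II_has_ws (positive_sets F) legal_fin res_fin (co_family F)
      \<longleftrightarrow> I_has_ws F legal_pt res_pt F"
    using II_set_game_if_I_point_game[OF assms] I_point_game_if_II_set_game[OF assms] by blast
  have "I_has_ws F legal_pt res_pt F \<longleftrightarrow> \<not> Ramsey F"
    unfolding I_has_ws_point_game_iff_tree Ramsey_def by blast
  with no_II_point no_I_set II_set_iff_I_point show ?thesis
    by blast
qed

end
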